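(* Let $E$ be the $k$-algebra generated by $t,w$ with relations $t^2=-t$ and $w^2=1$. Then the $k$-algebra homomorphism $E\to M_2(k[X])$ given by $$w\mapsto\begin{pmatrix}X&X^2-1\\-1&-X\end{pmatrix},\qquad t\mapsto\begin{pmatrix}0&0\\0&-1\end{pmatrix}$$ is injective, and it maps the centre $Z(E)$ isomorphically onto the scalar matrices $k[X]\cdot\mathrm{Id}$; in particular $Z(E)\cong k[X]$.
   Context: $k=\overline{\mathbb F}_p$. For a non-regular character $\xi$ of the finite torus $T(\mathbb F_q)$ of $\mathrm{PGL}_2$ (i.e. $\xi(\mathrm{diag}(a,b))=\xi(\mathrm{diag}(b,a))$), the block $e_\xi\mathcal H_{\mathrm{PGL}_2}$ of the pro-$p$ Iwahori–Hecke algebra of $\mathrm{PGL}_2(\mathfrak F)$ is isomorphic to $E$ via $t=e_\xi T_{s_0}$, $w=e_\xi T_\omega$, where $\omega$ is the image of $\begin{psmallmatrix}0&\varpi\\1&0\end{psmallmatrix}$ and $s_0=\begin{psmallmatrix}0&1\\1&0\end{psmallmatrix}$; a $k$-basis of $E$ is $1$, $(wt)^n$, $(tw)^n$, $w(tw)^{n-1}$, $t(wt)^{n-1}$ ($n\ge1$). *)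

theory Defs
  imports "HOL-Analysis.Analysis" "HOL-Library.Poly_Mapping"
    "HOL-Computational_Algebra.Polynomial"
begin

datatype gen = Gt | Gw

text \<open>Words in the generators, a monoid under concatenation (written additively
  so that the library's convolution ring structure on finitely supported
  functions applies).\<close>
datatype word = Word "gen list"

fun word_list :: "word \<Rightarrow> gen list" where "word_list (Word xs) = xs"

instantiation word :: monoid_add
begin
definition zero_word_def: "0 = Word []"
definition plus_word_def: "u + v = Word (word_list u @ word_list v)"
instance
proof
  fix a b c :: word
  show "a + b + c = a + (b + c)" by (cases a; cases b; cases c) (simp add: plus_word_def)
  show "0 + a = a" by (cases a) (simp add: plus_word_def zero_word_def)
  show "a + 0 = a" by (cases a) (simp add: plus_word_def zero_word_def)
qed
end

text \<open>The free associative k-algebra k<t,w>: finitely supported k-linear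
  combinations of words, with the convolution (concatenation) product.\<close>
type_synonym 'k freealg = "word \<Rightarrow>\<^sub>0 'k"

definition gen_t :: "'k::ring_1 freealg" where "gen_t = Poly_Mapping.single (Word [Gt]) 1"
definition gen_w :: "'k::ring_1 freealg" where "gen_w = Poly_Mapping.single (Word [Gw]) 1"

inductive_set rel_ideal :: "'k::ring_1 freealg set" where
  rel_t: "gen_t * gen_t + gen_t \<in> rel_ideal"
| rel_w: "gen_w * gen_w - 1 \<in> rel_ideal"
| zero: "0 \<in> rel_ideal"
| add: "x \<in> rel_ideal \<Longrightarrow> y \<in> rel_ideal \<Longrightarrow> x + y \<in> rel_ideal"
| mult: "x \<in> rel_ideal \<Longrightarrow> a * x * b \<in> rel_ideal"

text \<open>Equality in E = k<t,w>/(t^2+t, w^2-1).\<close>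
definition E_eq :: "'k::ring_1 freealg \<Rightarrow> 'k freealg \<Rightarrow> bool" where
  "E_eq f g \<longleftrightarrow> f - g \<in> rel_ideal"

definition E_centre :: "'k::ring_1 freealg set" where
  "E_centre = {f. \<forall>g. E_eq (f * g) (g * f)}"

definition matW :: "'k::comm_ring_1 poly ^ 2 ^ 2" where
  "matW = vector [vector [[:0, 1:], [:0, 1:]^2 - 1], vector [-1, -[:0, 1:]]]"

definition matT :: "'k::comm_ring_1 poly ^ 2 ^ 2" where
  "matT = vector [vector [0, 0], vector [0, -1]]"

fun gen_mat :: "gen \<Rightarrow> 'k::comm_ring_1 poly ^ 2 ^ 2" where
  "gen_mat Gt = matT"
| "gen_mat Gw = matW"

definition word_mat :: "word \<Rightarrow> 'k::comm_ring_1 poly ^ 2 ^ 2" where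
  "word_mat u = foldr (\<lambda>g M. gen_mat g ** M) (word_list u) (mat 1)"

definition phi :: "'k::comm_ring_1 freealg \<Rightarrow> 'k poly ^ 2 ^ 2" where
  "phi f = (\<Sum>u\<in>Poly_Mapping.keys f. mat [:Poly_Mapping.lookup f u:] ** word_mat u)"

end

theory Submission
  imports Defs
begin

text \<open>The element \<open>\<zeta> = w + wt + tw\<close> commutes with \<open>t\<close> and \<open>w\<close> modulo the relations,
  and it is mapped to \<open>X \<cdot> Id\<close>. Using \<open>t\<^sup>2 = -t\<close>, \<open>w\<^sup>2 = 1\<close> and \<open>tw = \<zeta> - w - wt\<close>, every
  element of \<open>E\<close> can be written as \<open>a + bt + cw + dwt\<close> with \<open>a, b, c, d \<in> k[\<zeta>]\<close>. Its image is
  \<open>[[a + cX, (c - d)(X\<^sup>2 - 1)], [-c, a - b + (d - c)X]]\<close>, which vanishes only if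
  \<open>a = b = c = d = 0\<close>; this gives injectivity. A matrix commuting with the images of \<open>t\<close> and
  \<open>w\<close> is scalar, and conversely \<open>q(\<zeta>)\<close> is central with image \<open>q \<cdot> Id\<close>.\<close>

definition mat2 :: "'a::zero \<Rightarrow> 'a \<Rightarrow> 'a \<Rightarrow> 'a \<Rightarrow> 'a^2^2" where
  "mat2 a b c d = vector [vector [a, b], vector [c, d]]"

lemma mat2_nth [simp]:
  "mat2 a b c d $ 1 $ 1 = a" "mat2 a b c d $ 1 $ 2 = b"
  "mat2 a b c d $ 2 $ 1 = c" "mat2 a b c d $ 2 $ 2 = d"
  by (simp_all add: mat2_def)

lemma mat2_eta: "M = mat2 (M $ 1 $ 1) (M $ 1 $ 2) (M $ 2 $ 1) (M $ 2 $ 2)"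
  by (simp add: vec_eq_iff forall_2)

lemma mat2_eq_iff: "mat2 a b c d = mat2 a' b' c' d' \<longleftrightarrow> a = a' \<and> b = b' \<and> c = c' \<and> d = d'"
  by (simp add: vec_eq_iff forall_2)

lemma mat2_mult:
  "mat2 a b c d ** mat2 a' b' c' d' =
    mat2 (a * a' + b * c') (a * b' + b * d') (c * a' + d * c') (c * b' + d * d' :: 'a::semiring_1)"
  by (simp add: vec_eq_iff forall_2 matrix_matrix_mult_def sum_2)

lemma mat2_add:
  "mat2 a b c d + mat2 a' b' c' d' = mat2 (a + a') (b + b') (c + c') (d + d' :: 'a::monoid_add)"
  by (simp add: vec_eq_iff forall_2)

lemma mat2_diff:
  "mat2 a b c d - mat2 a' b' c' d' = mat2 (a - a') (b - b') (c - c') (d - d' :: 'a::group_add)"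
  by (simp add: vec_eq_iff forall_2)

lemma zero_eq_mat2: "0 = (mat2 0 0 0 0 :: 'a::zero^2^2)"
  by (simp add: vec_eq_iff forall_2)

lemma mat_eq_mat2: "mat x = (mat2 x 0 0 x :: 'a::zero^2^2)"
  by (simp add: vec_eq_iff forall_2 mat_def)

lemma matW_eq_mat2: "matW = mat2 [:0, 1:] ([:0, 1:]^2 - 1) (-1) (-[:0, 1:])"
  by (simp add: matW_def mat2_def)

lemma matT_eq_mat2: "matT = mat2 0 0 0 (-1)"
  by (simp add: matT_def mat2_def)

lemma matrix_add_rdistrib: "((A :: 'a::semiring_1^'n^'m) + B) ** C = A ** C + B ** C"
  by (simp add: matrix_matrix_mult_def vec_eq_iff sum.distrib distrib_right)

lemma mat_add: "mat (a + b) = (mat a + mat b :: 'a::monoid_add^'n^'n)"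
  by (simp add: mat_def vec_eq_iff)

lemma mat_mult_nth: "(mat c ** A) $ i $ j = c * (A $ i $ j :: 'a::semiring_1)"
proof -
  have "(mat c ** A) $ i $ j = (\<Sum>k\<in>UNIV. (if i = k then c else 0) * A $ k $ j)"
    by (simp add: matrix_matrix_mult_def mat_def)
  also have "\<dots> = (\<Sum>k\<in>UNIV. if k = i then c * A $ k $ j else 0)"
    by (rule sum.cong) auto
  finally show ?thesis
    by simp
qed

lemma mult_mat_nth: "(A ** mat c) $ i $ j = (A $ i $ j :: 'a::semiring_1) * c"
  by (simp add: matrix_matrix_mult_def mat_def if_distrib cong: if_cong)

lemma mat_mult: "mat (a * b) = (mat a ** mat b :: 'a::semiring_1^'n^'n)"
  by (simp add: vec_eq_iff mat_mult_nth) (simp add: mat_def)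

lemma mat_commute: "mat c ** A = A ** (mat c :: 'a::comm_semiring_1^'n^'n)"
  by (simp add: vec_eq_iff mat_mult_nth mult_mat_nth mult.commute)

lemma poly_mapping_sum_single:
  "(f :: 'a \<Rightarrow>\<^sub>0 'b::comm_monoid_add) =
    (\<Sum>u\<in>Poly_Mapping.keys f. Poly_Mapping.single u (Poly_Mapping.lookup f u))"
  by (rule poly_mapping_eqI) (simp add: lookup_sum lookup_single when_def in_keys_iff)

lemma poly_mapping_induct_single [case_names zero single add]:
  fixes P :: "('a \<Rightarrow>\<^sub>0 'b::comm_monoid_add) \<Rightarrow> bool"
  assumes "P 0" and "\<And>u c. P (Poly_Mapping.single u c)" and "\<And>f g. P f \<Longrightarrow> P g \<Longrightarrow> P (f + g)"
  shows "P f"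
proof -
  have "P (\<Sum>u\<in>A. Poly_Mapping.single u (Poly_Mapping.lookup f u))" for A
    by (induction A rule: infinite_finite_induct) (simp_all add: assms)
  then show ?thesis
    by (subst poly_mapping_sum_single)
qed

definition scalar :: "'k::comm_ring_1 \<Rightarrow> 'k freealg" where
  "scalar c = Poly_Mapping.single 0 c"

lemma scalar_commute: "scalar c * f = f * scalar c"
  by (induction f rule: poly_mapping_induct_single)
    (simp_all add: scalar_def mult_single mult.commute distrib_left distrib_right)

lemma freealg_induct [case_names scalar gen_t gen_w add]:
  fixes P :: "'k::comm_ring_1 freealg \<Rightarrow> bool"
  assumes scalar: "\<And>c. P (scalar c)"
    and gen_t: "\<And>f. P f \<Longrightarrow> P (gen_t * f)"
    and gen_w: "\<And>f. P f \<Longrightarrow> P (gen_w * f)"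
    and add: "\<And>f g. P f \<Longrightarrow> P g \<Longrightarrow> P (f + g)"
  shows "P f"
proof (induction f rule: poly_mapping_induct_single)
  case zero
  then show ?case
    using scalar[of 0] by (simp add: scalar_def)
next
  case (single u c)
  obtain xs where "u = Word xs"
    by (cases u)
  then show ?case
  proof (induction xs arbitrary: u)
    case Nil
    then show ?case
      using scalar[of c] by (simp add: scalar_def zero_word_def)
  next
    case (Cons x xs)
    have "Poly_Mapping.single u c = Poly_Mapping.single (Word [x]) 1 * Poly_Mapping.single (Word xs) c"
      by (simp add: Cons.prems mult_single plus_word_def)
    with Cons.IH gen_t gen_w show ?case
      by (cases x) (simp_all add: gen_t_def gen_w_def)
  qed
qed (rule add)

lemma phi_eq_sum_superset:
  fixes f :: "'k::comm_ring_1 freealg"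
  assumes "finite S" and "Poly_Mapping.keys f \<subseteq> S"
  shows "phi f = (\<Sum>u\<in>S. mat [:Poly_Mapping.lookup f u:] ** word_mat u)"
  unfolding phi_def
  by (rule sum.mono_neutral_left) (use assms in \<open>auto simp: in_keys_iff\<close>)

lemma phi_single: "phi (Poly_Mapping.single u c) = mat [:c:] ** (word_mat u :: 'k::comm_ring_1 poly^2^2)"
  by (simp add: phi_def)

lemma phi_scalar: "phi (scalar c) = mat [:c:]"
  by (simp add: scalar_def phi_single word_mat_def zero_word_def)

lemma phi_one: "phi (1 :: 'k::comm_ring_1 freealg) = mat 1"
  using phi_scalar[of 1] by (simp add: scalar_def pCons_one)

lemma phi_zero: "phi (0 :: 'k::comm_ring_1 freealg) = 0"
  by (simp add: phi_def)

lemma phi_add: "phi (f + g) = phi f + phi (g :: 'k::comm_ring_1 freealg)"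
proof -
  let ?S = "Poly_Mapping.keys f \<union> Poly_Mapping.keys g"
  have const_poly_add: "[:x + y:] = [:x:] + [:y:]" for x y :: 'k
    by simp
  have "phi (f + g) = (\<Sum>u\<in>?S. mat [:Poly_Mapping.lookup (f + g) u:] ** word_mat u)"
    by (rule phi_eq_sum_superset) (auto dest: keys_add[THEN subsetD])
  also have "\<dots> = (\<Sum>u\<in>?S. mat [:Poly_Mapping.lookup f u:] ** word_mat u)
      + (\<Sum>u\<in>?S. mat [:Poly_Mapping.lookup g u:] ** word_mat u)"
    using const_poly_add
    by (simp add: lookup_add mat_add matrix_add_rdistrib sum.distrib del: add_pCons)
  also have "\<dots> = phi f + phi g"
    by (simp add: phi_eq_sum_superset[of ?S])
  finally show ?thesis .
qed

lemma phi_diff: "phi (f - g) = phi f - phi (g :: 'k::comm_ring_1 freealg)"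
  using phi_add[of "f - g" g] by (simp add: eq_diff_eq)

lemma foldr_gen_mat:
  "foldr (\<lambda>g M. gen_mat g ** M) xs N =
    foldr (\<lambda>g M. gen_mat g ** M) xs (mat 1) ** (N :: 'k::comm_ring_1 poly^2^2)"
  by (induction xs) (simp_all add: matrix_mul_assoc)

lemma word_mat_add: "word_mat (u + v) = word_mat u ** (word_mat v :: 'k::comm_ring_1 poly^2^2)"
  by (cases u; cases v) (simp add: word_mat_def plus_word_def foldr_gen_mat[of _ "foldr _ _ _"])

lemma phi_mult_single:
  "phi (Poly_Mapping.single u a * Poly_Mapping.single v b) =
    phi (Poly_Mapping.single u a) ** phi (Poly_Mapping.single v (b :: 'k::comm_ring_1))"
proof -
  have "phi (Poly_Mapping.single u a * Poly_Mapping.single v b) =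
      mat [:a:] ** mat [:b:] ** (word_mat u ** word_mat v)"
    by (simp add: mult_single phi_single word_mat_add mat_mult[symmetric] mult.commute)
  also have "\<dots> = mat [:a:] ** (mat [:b:] ** word_mat u) ** word_mat v"
    by (simp add: matrix_mul_assoc)
  also have "\<dots> = mat [:a:] ** (word_mat u ** mat [:b:]) ** word_mat v"
    by (simp only: mat_commute[of "[:b:]"])
  finally show ?thesis
    by (simp add: phi_single matrix_mul_assoc)
qed

lemma phi_mult: "phi (f * g) = phi f ** phi (g :: 'k::comm_ring_1 freealg)"
proof (induction f rule: poly_mapping_induct_single)
  case (single u a)
  show ?case
    by (induction g rule: poly_mapping_induct_single)
      (simp_all add: phi_zero phi_add phi_mult_single distrib_left matrix_add_ldistrib)
qed (simp_all add: phi_zero phi_add distrib_right matrix_add_rdistrib)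

lemma phi_gen_t: "phi (gen_t :: 'k::comm_ring_1 freealg) = matT"
  by (simp add: gen_t_def phi_single word_mat_def pCons_one)

lemma phi_gen_w: "phi (gen_w :: 'k::comm_ring_1 freealg) = matW"
  by (simp add: gen_w_def phi_single word_mat_def pCons_one)

lemma phi_rel_ideal: "x \<in> rel_ideal \<Longrightarrow> phi (x :: 'k::comm_ring_1 freealg) = 0"
proof (induction rule: rel_ideal.induct)
  case rel_t
  show ?case
    by (simp add: phi_add phi_mult phi_gen_t matT_eq_mat2 mat2_mult mat2_add flip: zero_eq_mat2)
next
  case rel_w
  show ?case
    by (simp add: phi_diff phi_mult phi_one phi_gen_w matW_eq_mat2 mat_eq_mat2 mat2_mult mat2_diff
        mat2_eq_iff algebra_simps power2_eq_square flip: zero_eq_mat2)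
qed (simp_all add: phi_zero phi_add phi_mult)

lemma phi_E_eq: "E_eq f g \<Longrightarrow> phi f = phi (g :: 'k::comm_ring_1 freealg)"
  using phi_rel_ideal[of "f - g"] by (simp add: E_eq_def phi_diff)

lemma rel_ideal_mult_left: "x \<in> rel_ideal \<Longrightarrow> a * x \<in> rel_ideal"
  using rel_ideal.mult[of x a 1] by simp

lemma rel_ideal_mult_right: "x \<in> rel_ideal \<Longrightarrow> x * b \<in> rel_ideal"
  using rel_ideal.mult[of x 1 b] by simp

lemma rel_ideal_uminus: "x \<in> rel_ideal \<Longrightarrow> - x \<in> rel_ideal"
  using rel_ideal_mult_left[of x "-1"] by simp

lemma rel_ideal_diff: "x \<in> rel_ideal \<Longrightarrow> y \<in> rel_ideal \<Longrightarrow> x - y \<in> rel_ideal"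
  using rel_ideal.add[of x "- y"] rel_ideal_uminus[of y] by simp

lemma E_eq_refl: "E_eq x x"
  by (simp add: E_eq_def rel_ideal.zero)

lemma E_eq_sym: "E_eq x y \<Longrightarrow> E_eq y x"
  unfolding E_eq_def using rel_ideal_uminus by fastforce

lemma E_eq_trans [trans]: "E_eq x y \<Longrightarrow> E_eq y z \<Longrightarrow> E_eq x z"
  unfolding E_eq_def using rel_ideal.add by fastforce

lemma E_eq_add: "E_eq a b \<Longrightarrow> E_eq c d \<Longrightarrow> E_eq (a + c) (b + d)"
  unfolding E_eq_def using rel_ideal.add by (fastforce simp: algebra_simps)

lemma E_eq_mult:
  assumes "E_eq a b" and "E_eq c d"
  shows "E_eq (a * c) (b * d)"
proof -
  have "a * c - b * d = (a - b) * c + b * (c - d)"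
    by (simp add: algebra_simps)
  then show ?thesis
    using assms unfolding E_eq_def by (metis rel_ideal.add rel_ideal_mult_left rel_ideal_mult_right)
qed

lemma E_eq_mult_left: "E_eq a b \<Longrightarrow> E_eq (c * a) (c * b)"
  by (rule E_eq_mult[OF E_eq_refl])

lemma E_eq_mult_right: "E_eq a b \<Longrightarrow> E_eq (a * c) (b * c)"
  by (rule E_eq_mult[OF _ E_eq_refl])

section \<open>The central element \<open>\<zeta>\<close>\<close>

definition zeta :: "'k::comm_ring_1 freealg" where
  "zeta = gen_w + gen_w * gen_t + gen_t * gen_w"

definition eval_zeta :: "'k::comm_ring_1 poly \<Rightarrow> 'k freealg" where
  "eval_zeta q = fold_coeffs (\<lambda>a f. scalar a + f * zeta) q 0"

lemma eval_zeta_0 [simp]: "eval_zeta 0 = 0"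
  by (simp add: eval_zeta_def)

lemma eval_zeta_pCons [simp]: "eval_zeta (pCons a q) = scalar a + eval_zeta q * zeta"
  by (cases "pCons a q = 0") (auto simp: eval_zeta_def scalar_def)

lemma eval_zeta_add: "eval_zeta (p + q) = eval_zeta p + eval_zeta q"
  by (induction p q rule: poly_induct2) (simp_all add: scalar_def single_add algebra_simps)

lemma eval_zeta_uminus: "eval_zeta (- q) = - eval_zeta q"
  by (induction q) (simp_all add: scalar_def single_uminus)

lemma eval_zeta_diff: "eval_zeta (p - q) = eval_zeta p - eval_zeta q"
  using eval_zeta_add[of p "- q"] by (simp add: eval_zeta_uminus)

lemma phi_zeta: "phi (zeta :: 'k::comm_ring_1 freealg) = mat [:0, 1:]"
  by (simp add: zeta_def phi_add phi_mult phi_gen_t phi_gen_w matT_eq_mat2 matW_eq_mat2 mat_eq_mat2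
      mat2_mult mat2_add mat2_eq_iff algebra_simps power2_eq_square)

lemma phi_eval_zeta: "phi (eval_zeta q) = mat q"
  by (induction q) (simp_all add: phi_zero phi_add phi_mult phi_scalar phi_zeta
      flip: mat_add mat_mult)

lemma zeta_commute_gen_t: "E_eq (zeta * gen_t) (gen_t * zeta)"
proof -
  have "zeta * gen_t - gen_t * zeta =
      gen_w * (gen_t * gen_t + gen_t) - (gen_t * gen_t + gen_t) * gen_w"
    by (simp add: zeta_def algebra_simps)
  then show ?thesis
    unfolding E_eq_def by (metis rel_ideal_diff rel_ideal_mult_left rel_ideal_mult_right rel_ideal.rel_t)
qed

lemma zeta_commute_gen_w: "E_eq (zeta * gen_w) (gen_w * zeta)"
proof -
  have "zeta * gen_w - gen_w * zeta =
      gen_t * (gen_w * gen_w - 1) - (gen_w * gen_w - 1) * gen_t"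
    by (simp add: zeta_def algebra_simps)
  then show ?thesis
    unfolding E_eq_def by (metis rel_ideal_diff rel_ideal_mult_left rel_ideal_mult_right rel_ideal.rel_w)
qed

lemma zeta_central: "E_eq (zeta * f) (f * zeta)"
proof (induction f rule: freealg_induct)
  case (scalar c)
  then show ?case
    by (simp add: scalar_commute E_eq_refl)
next
  case (gen_t f)
  have "E_eq (zeta * gen_t * f) (gen_t * zeta * f)"
    by (rule E_eq_mult_right[OF zeta_commute_gen_t])
  also have "E_eq \<dots> (gen_t * f * zeta)"
    using E_eq_mult_left[OF gen_t.IH] by (simp add: mult.assoc)
  finally show ?case
    by (simp add: mult.assoc)
next
  case (gen_w f)
  have "E_eq (zeta * gen_w * f) (gen_w * zeta * f)"
    by (rule E_eq_mult_right[OF zeta_commute_gen_w])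
  also have "E_eq \<dots> (gen_w * f * zeta)"
    using E_eq_mult_left[OF gen_w.IH] by (simp add: mult.assoc)
  finally show ?case
    by (simp add: mult.assoc)
next
  case (add f g)
  then show ?case
    using E_eq_add by (fastforce simp: distrib_left distrib_right)
qed

lemma eval_zeta_central: "E_eq (eval_zeta q * f) (f * eval_zeta q)"
proof (induction q)
  case (pCons a q)
  have "E_eq (eval_zeta q * zeta * f) (eval_zeta q * f * zeta)"
    using E_eq_mult_left[OF zeta_central] by (simp add: mult.assoc)
  also have "E_eq \<dots> (f * eval_zeta q * zeta)"
    by (rule E_eq_mult_right[OF pCons.IH])
  finally have "E_eq (eval_zeta q * zeta * f) (f * (eval_zeta q * zeta))"
    by (simp only: mult.assoc)
  then have "E_eq (scalar a * f + eval_zeta q * zeta * f) (f * scalar a + f * (eval_zeta q * zeta))"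
    by (simp only: E_eq_add E_eq_refl scalar_commute)
  then show ?case
    by (simp only: eval_zeta_pCons distrib_left distrib_right)
qed (simp add: E_eq_refl)

section \<open>Normal form and injectivity\<close>

definition zeta_comb :: "'k::comm_ring_1 poly \<Rightarrow> 'k poly \<Rightarrow> 'k poly \<Rightarrow> 'k poly \<Rightarrow> 'k freealg" where
  "zeta_comb a b c d =
    eval_zeta a + eval_zeta b * gen_t + eval_zeta c * gen_w + eval_zeta d * gen_w * gen_t"

lemma zeta_comb_add:
  "zeta_comb a b c d + zeta_comb a' b' c' d' = zeta_comb (a + a') (b + b') (c + c') (d + d')"
  by (simp add: zeta_comb_def eval_zeta_add algebra_simps)

lemma gen_t_mult_zeta_comb:
  "E_eq (gen_t * zeta_comb a b c d) (zeta_comb (pCons 0 c) (a - b + pCons 0 d) (- c) (- c))"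
proof -
  let ?t = "gen_t :: 'k::comm_ring_1 freealg" and ?w = "gen_w :: 'k freealg"
  \<comment> \<open>uses \<open>tw = \<zeta> - w - wt\<close>, hence \<open>twt = \<zeta>t - wt(t + 1) \<equiv> \<zeta>t\<close>\<close>
  have "gen_t * zeta_comb a b c d - zeta_comb (pCons 0 c) (a - b + pCons 0 d) (- c) (- c) =
      (?t * eval_zeta a - eval_zeta a * ?t) + (?t * eval_zeta b - eval_zeta b * ?t) * ?t
      + eval_zeta b * (?t * ?t + ?t) + (?t * eval_zeta c - eval_zeta c * ?t) * ?w
      + (?t * eval_zeta d - eval_zeta d * ?t) * ?w * ?t - eval_zeta d * ?w * (?t * ?t + ?t)"
    by (simp add: zeta_comb_def eval_zeta_add eval_zeta_diff eval_zeta_uminus zeta_def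
        scalar_def algebra_simps)
  moreover have "?t * eval_zeta q - eval_zeta q * ?t \<in> rel_ideal" for q
    using eval_zeta_central E_eq_sym unfolding E_eq_def by blast
  ultimately show ?thesis
    unfolding E_eq_def
    by (metis rel_ideal_diff rel_ideal.add rel_ideal_mult_left rel_ideal_mult_right rel_ideal.rel_t)
qed

lemma gen_w_mult_zeta_comb: "E_eq (gen_w * zeta_comb a b c d) (zeta_comb c d a b)"
proof -
  let ?t = "gen_t :: 'k::comm_ring_1 freealg" and ?w = "gen_w :: 'k freealg"
  have "gen_w * zeta_comb a b c d - zeta_comb c d a b =
      (?w * eval_zeta a - eval_zeta a * ?w) + (?w * eval_zeta b - eval_zeta b * ?w) * ?t
      + (?w * eval_zeta c - eval_zeta c * ?w) * ?w + eval_zeta c * (?w * ?w - 1)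
      + (?w * eval_zeta d - eval_zeta d * ?w) * ?w * ?t + eval_zeta d * (?w * ?w - 1) * ?t"
    by (simp add: zeta_comb_def algebra_simps)
  moreover have "?w * eval_zeta q - eval_zeta q * ?w \<in> rel_ideal" for q
    using eval_zeta_central E_eq_sym unfolding E_eq_def by blast
  ultimately show ?thesis
    unfolding E_eq_def
    by (metis rel_ideal_diff rel_ideal.add rel_ideal_mult_left rel_ideal_mult_right rel_ideal.rel_w)
qed

lemma ex_E_eq_zeta_comb: "\<exists>a b c d. E_eq f (zeta_comb a b c d)"
proof (induction f rule: freealg_induct)
  case (scalar c)
  have "zeta_comb [:c:] 0 0 0 = scalar c"
    by (simp add: zeta_comb_def)
  then show ?case
    using E_eq_refl by metis
next
  case (gen_t f)
  then show ?case
    using E_eq_mult_left E_eq_trans gen_t_mult_zeta_comb by blast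
next
  case (gen_w f)
  then show ?case
    using E_eq_mult_left E_eq_trans gen_w_mult_zeta_comb by blast
next
  case (add f g)
  then show ?case
    using E_eq_add zeta_comb_add by metis
qed

lemma phi_zeta_comb:
  "phi (zeta_comb a b c d) =
    mat2 (a + c * [:0, 1:]) ((c - d) * ([:0, 1:]^2 - 1)) (- c) (a - b + (d - c) * [:0, 1:])"
proof -
  have "phi (zeta_comb a b c d) = mat a + mat b ** matT + mat c ** matW + mat d ** matW ** matT"
    by (simp add: zeta_comb_def phi_add phi_mult phi_eval_zeta phi_gen_t phi_gen_w)
  also have "\<dots> = mat2 (a + c * [:0, 1:]) ((c - d) * ([:0, 1:]^2 - 1)) (- c) (a - b + (d - c) * [:0, 1:])"
    unfolding matT_eq_mat2 matW_eq_mat2 mat_eq_mat2 mat2_mult mat2_add mat2_eq_iff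
    by (simp add: algebra_simps)
  finally show ?thesis .
qed

lemma zeta_comb_eq_0_if_phi_eq_0:
  fixes a b c d :: "'k::idom poly"
  assumes "phi (zeta_comb a b c d) = 0"
  shows "a = 0 \<and> b = 0 \<and> c = 0 \<and> d = 0"
proof -
  have "poly ([:0, 1:]^2 - 1) (0 :: 'k) \<noteq> 0"
    by simp
  then have "[:0, 1:]^2 - 1 \<noteq> (0 :: 'k poly)"
    by (metis poly_0)
  moreover have "a + c * [:0, 1:] = 0" "(c - d) * ([:0, 1:]^2 - 1) = 0" "- c = 0"
      "a - b + (d - c) * [:0, 1:] = 0"
    using assms by (simp_all only: phi_zeta_comb zero_eq_mat2 mat2_eq_iff)
  ultimately show ?thesis
    by auto
qed

lemma E_eq_if_phi_eq:
  assumes "phi f = phi (g :: 'k::idom freealg)"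
  shows "E_eq f g"
proof -
  obtain a b c d where comb: "E_eq (f - g) (zeta_comb a b c d)"
    using ex_E_eq_zeta_comb by blast
  then have "phi (zeta_comb a b c d) = 0"
    using assms phi_E_eq phi_diff by (metis diff_self)
  then have "a = 0 \<and> b = 0 \<and> c = 0 \<and> d = 0"
    by (rule zeta_comb_eq_0_if_phi_eq_0)
  with comb show ?thesis
    by (simp add: E_eq_def zeta_comb_def)
qed

section \<open>The centre\<close>

lemma commute_matT_matW_imp_mat:
  fixes M :: "'k::comm_ring_1 poly^2^2"
  assumes "M ** matT = matT ** M" and "M ** matW = matW ** M"
  shows "\<exists>c. M = mat c"
proof -
  obtain p q r s where M: "M = mat2 p q r s"
    using mat2_eta by blast
  from assms(1) have "q = 0" "r = 0"
    by (simp_all add: M matT_eq_mat2 mat2_mult mat2_eq_iff)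
  with assms(2) have "s = p"
    by (simp add: M matW_eq_mat2 mat2_mult mat2_eq_iff)
  with M \<open>q = 0\<close> \<open>r = 0\<close> show ?thesis
    by (auto simp: mat_eq_mat2)
qed

lemma eval_zeta_in_E_centre: "eval_zeta q \<in> E_centre"
  by (simp add: E_centre_def eval_zeta_central)

lemma phi_E_centre:
  "phi ` (E_centre :: 'k::comm_ring_1 freealg set) = {mat c | c :: 'k poly. True}"
proof (intro equalityI subsetI)
  fix M assume "M \<in> phi ` (E_centre :: 'k freealg set)"
  then obtain f :: "'k freealg" where "f \<in> E_centre" "M = phi f"
    by blast
  then have "phi (f * gen_t) = phi (gen_t * f)" "phi (f * gen_w) = phi (gen_w * f)"
    by (simp_all add: E_centre_def phi_E_eq)
  then have "M ** matT = matT ** M" "M ** matW = matW ** M"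
    by (simp_all add: \<open>M = phi f\<close> phi_mult phi_gen_t phi_gen_w)
  then show "M \<in> {mat c | c. True}"
    using commute_matT_matW_imp_mat by blast
next
  fix M :: "'k poly^2^2"
  assume "M \<in> {mat c | c. True}"
  then obtain c where "M = mat c"
    by blast
  then show "M \<in> phi ` (E_centre :: 'k freealg set)"
    using phi_eval_zeta eval_zeta_in_E_centre by (metis image_eqI)
qed

theorem proposition3p8:
  fixes p :: nat
  assumes "prime p" and "CHAR('k::field) = p"
    and "\<forall>q :: 'k poly. degree q > 0 \<longrightarrow> (\<exists>x. poly q x = 0)"
    and "\<forall>x :: 'k. \<exists>q :: 'k poly. q \<noteq> 0 \<and> (\<forall>i. coeff q i \<in> range of_int) \<and> poly q x = 0"
  shows "(\<forall>f g :: 'k freealg. phi (f * g) = phi f ** phi g)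
    \<and> (\<forall>f g :: 'k freealg. E_eq f g \<longrightarrow> phi f = phi g)
    \<and> (\<forall>f g :: 'k freealg. phi f = phi g \<longrightarrow> E_eq f g)
    \<and> phi ` (E_centre :: 'k freealg set) = {mat c | c :: 'k poly. True}"
  using phi_mult phi_E_eq E_eq_if_phi_eq phi_E_centre by blast

end
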